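(* Let $f,g,\beta$ be functions with $\lim_{x\to\infty}f(x)=\lim_{x\to\infty}g(x)=\lim_{x\to\infty}\beta(x)=\infty$. If a problem $\Pi_0$ is $(f,g)$-FPT gap reducible to a problem $\Pi_1$ and $\Pi_0$ is $\beta$-weakly inherently enumerative, then there is a constant $c>0$ such that $\Pi_1$ is $(c\cdot\beta\circ g)$-weakly inherently enumerative.
   Context: An optimization problem $\Pi$ has instances $I$ with optimum value $\mathrm{OPT}_\Pi(I)$. $O_{q,r}(\cdot)$ hides a multiplicative factor depending only on $q,r$. $\Pi_0$ is $(f,g)$-FPT gap reducible to $\Pi_1$ if there is an algorithm that takes an instance $I_0$ of $\Pi_0$ and integers $q,r$, runs in time $t(q,r)\cdot|I_0|^{O(1)}$ for some computable $t$, and produces an instance $I_1$ of $\Pi_1$ such that: for every positive integer $q$, if $\mathrm{OPT}_{\Pi_0}(I_0)\ge q$ then $\mathrm{OPT}_{\Pi_1}(I_1)\ge f(q)$; and for every positive integer $r$, if $\mathrm{OPT}_{\Pi_0}(I_0)<g(r)$ then $\mathrm{OPT}_{\Pi_1}(I_1)<r$. For $\beta$ with $\beta(r)\to\infty$, $\Pi$ is $\beta$-weakly inherently enumerative if there is a constant $r_0>0$ such that for all integers $q\ge r\ge r_0$ no algorithm can, on every instance $I$, decide whether $\mathrm{OPT}_\Pi(I)<r$ or $\mathrm{OPT}_\Pi(I)\ge q$ in time $O_{q,r}(|I|^{\beta(r)})$. *)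

theory Defs
  imports Complex_Main
begin

datatype sym = Bl | Bit bool | Hash
datatype dir = L | R | S

text \<open>A machine is (number of states n, transition function). States are 0..<n,
  the start state is 0; a transition of None means: halt.\<close>
type_synonym tm = "nat \<times> (nat \<Rightarrow> sym \<Rightarrow> (nat \<times> sym \<times> dir) option)"

definition tm_wf :: "tm \<Rightarrow> bool" where
  "tm_wf M \<longleftrightarrow> 0 < fst M \<and>
     (\<forall>q<fst M. \<forall>a q' b d. snd M q a = Some (q', b, d) \<longrightarrow> q' < fst M)"

text \<open>Configuration: (state, tape left of head in reverse order, tape from head on).\<close>
type_synonym config = "nat \<times> sym list \<times> sym list"

fun head_sym :: "sym list \<Rightarrow> sym" where
  "head_sym [] = Bl"
| "head_sym (a # _) = a"

fun move :: "dir \<Rightarrow> sym list \<Rightarrow> sym list \<Rightarrow> sym list \<times> sym list" where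
  "move S l r = (l, r)"
| "move R l [] = (Bl # l, [])"
| "move R l (a # r) = (a # l, r)"
| "move L [] r = ([], r)"
| "move L (a # l) r = (l, a # r)"

fun tm_step :: "tm \<Rightarrow> config \<Rightarrow> config" where
  "tm_step M (q, l, r) =
     (case snd M q (head_sym r) of
        None \<Rightarrow> (q, l, r)
      | Some (q', b, d) \<Rightarrow> (let (l', r') = move d l (b # tl r) in (q', l', r')))"

fun halted :: "tm \<Rightarrow> config \<Rightarrow> bool" where
  "halted M (q, l, r) \<longleftrightarrow> snd M q (head_sym r) = None"

definition conf :: "tm \<Rightarrow> sym list \<Rightarrow> nat \<Rightarrow> config" where
  "conf M x t = (tm_step M ^^ t) (0, [], x)"

definition halts_within :: "tm \<Rightarrow> sym list \<Rightarrow> nat \<Rightarrow> bool" where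
  "halts_within M x t \<longleftrightarrow> halted M (conf M x t)"

text \<open>Function output convention: on halting the tape holds exactly the output word,
  starting at the head at the left end of the tape.\<close>
definition computes_within :: "tm \<Rightarrow> sym list \<Rightarrow> nat \<Rightarrow> bool list \<Rightarrow> bool" where
  "computes_within M x t y \<longleftrightarrow> halts_within M x t \<and>
     (case conf M x t of (q, l, r) \<Rightarrow> l = [] \<and> (\<exists>k. r = map Bit y @ replicate k Bl))"

text \<open>Decision convention: accept iff on halting the head reads the symbol 1.\<close>
definition accepts_within :: "tm \<Rightarrow> sym list \<Rightarrow> nat \<Rightarrow> bool" where
  "accepts_within M x t \<longleftrightarrow> halts_within M x t \<and>
     (case conf M x t of (q, l, r) \<Rightarrow> head_sym r = Bit True)"

definition rejects_within :: "tm \<Rightarrow> sym list \<Rightarrow> nat \<Rightarrow> bool" where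
  "rejects_within M x t \<longleftrightarrow> halts_within M x t \<and>
     (case conf M x t of (q, l, r) \<Rightarrow> head_sym r \<noteq> Bit True)"

fun bin :: "nat \<Rightarrow> bool list" where
  "bin n = (if n = 0 then [] else odd n # bin (n div 2))"

definition enc_word :: "bool list \<Rightarrow> sym list" where
  "enc_word w = map Bit w"

definition enc2 :: "nat \<Rightarrow> nat \<Rightarrow> sym list" where
  "enc2 q r = map Bit (bin q) @ [Hash] @ map Bit (bin r)"

definition enc3 :: "bool list \<Rightarrow> nat \<Rightarrow> nat \<Rightarrow> sym list" where
  "enc3 I q r = map Bit I @ [Hash] @ enc2 q r"

definition computable2 :: "(nat \<Rightarrow> nat \<Rightarrow> nat) \<Rightarrow> bool" where
  "computable2 t \<longleftrightarrow> (\<exists>M. tm_wf M \<and> (\<forall>q r. \<exists>s. computes_within M (enc2 q r) s (bin (t q r))))"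

record opt_problem =
  inst :: "bool list set"
  opt :: "bool list \<Rightarrow> real"

definition fpt_gap_reducible ::
  "(nat \<Rightarrow> nat) \<Rightarrow> (nat \<Rightarrow> nat) \<Rightarrow> opt_problem \<Rightarrow> opt_problem \<Rightarrow> bool" where
  "fpt_gap_reducible f g P0 P1 \<longleftrightarrow>
     (\<exists>M t d. tm_wf M \<and> computable2 t \<and>
        (\<forall>I0\<in>inst P0. \<forall>q r. 0 < q \<longrightarrow> 0 < r \<longrightarrow>
           (\<exists>I1 s. s \<le> t q r * (max 1 (length I0)) ^ d \<and>
                   computes_within M (enc3 I0 q r) s I1 \<and> I1 \<in> inst P1 \<and>
                   (opt P0 I0 \<ge> real q \<longrightarrow> opt P1 I1 \<ge> real (f q)) \<and>
                   (opt P0 I0 < real (g r) \<longrightarrow> opt P1 I1 < real r))))"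

definition gap_decides_in ::
  "opt_problem \<Rightarrow> nat \<Rightarrow> nat \<Rightarrow> real \<Rightarrow> tm \<Rightarrow> real \<Rightarrow> bool" where
  "gap_decides_in P r q e M C \<longleftrightarrow>
     (\<forall>I\<in>inst P. \<exists>s. real s \<le> C * real (max 1 (length I)) powr e \<and>
        halts_within M (enc_word I) s \<and>
        (opt P I < real r \<longrightarrow> rejects_within M (enc_word I) s) \<and>
        (opt P I \<ge> real q \<longrightarrow> accepts_within M (enc_word I) s))"

definition weakly_inh_enum :: "(nat \<Rightarrow> real) \<Rightarrow> opt_problem \<Rightarrow> bool" where
  "weakly_inh_enum \<beta> P \<longleftrightarrow> filterlim \<beta> at_top sequentially \<and>
     (\<exists>r0::real. r0 > 0 \<and>
        (\<forall>q r::nat. r0 \<le> real r \<and> r \<le> q \<longrightarrow>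
           \<not> (\<exists>M C. tm_wf M \<and> gap_decides_in P r q (\<beta> r) M C)))"

end

theory Submission
  imports Defs
begin

text \<open>Suppose \<open>\<Pi>\<^sub>1\<close>'s gap problem \<open>(r, q)\<close> were decided in time \<open>C |I|\<^bsup>\<beta>(g r)/(d+1)\<^esup>\<close>, where
  \<open>|I|\<^bsup>d\<^esup>\<close> bounds the running time of the reduction. Choose \<open>Q \<ge> g r\<close> with \<open>f Q \<ge> q\<close>. A machine that
  appends the parameters \<open>Q, r\<close> to its input, runs the reduction and then the decider for \<open>\<Pi>\<^sub>1\<close>
  decides \<open>\<Pi>\<^sub>0\<close>'s gap problem \<open>(g r, Q)\<close>; the reduced instance has length \<open>O(|I|\<^bsup>d+1\<^esup>)\<close>, so this
  takes time \<open>O(|I|\<^bsup>\<beta>(g r)\<^esup>)\<close>. Once \<open>g r\<close> exceeds the threshold of \<open>\<Pi>\<^sub>0\<close> this is impossible,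
  so \<open>c = 1/(d+1)\<close> works.\<close>

definition pad_head :: "sym list \<Rightarrow> sym list" where
  "pad_head r = head_sym r # tl r"

lemma pad_head_Cons [simp]: "pad_head (a # r) = a # r"
  by (simp add: pad_head_def)

lemma pad_head_Nil [simp]: "pad_head [] = [Bl]"
  by (simp add: pad_head_def)

lemma tm_step_R:
  "snd M q (head_sym r) = Some (q', b, R) \<Longrightarrow> tm_step M (q, l, r) = (q', b # l, tl r)"
  by (cases r) auto

lemma tm_step_S:
  "snd M q (head_sym r) = Some (q', b, S) \<Longrightarrow> tm_step M (q, l, r) = (q', l, b # tl r)"
  by (cases r) auto

lemma tm_step_L:
  "snd M q (head_sym r) = Some (q', head_sym r, L) \<Longrightarrow>
   tm_step M (q, a # l, r) = (q', l, a # pad_head r)"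
  by (cases r) (auto simp: pad_head_def)

lemma tm_step_halted: "halted M c \<Longrightarrow> tm_step M c = c"
  by (cases c) auto

lemma tm_steps_halted: "halted M c \<Longrightarrow> (tm_step M ^^ n) c = c"
  by (induction n) (auto simp: tm_step_halted)

lemma tm_steps_write:
  assumes "\<forall>i<length v. \<forall>a. snd M (s + i) a = Some (Suc (s + i), v ! i, R)"
  shows "(tm_step M ^^ length v) (s, l, []) = (s + length v, rev v @ l, [])"
  using assms
proof (induction v arbitrary: s l)
  case Nil
  then show ?case by simp
next
  case (Cons x v)
  have "snd M s Bl = Some (Suc s, x, R)"
    using Cons.prems by (metis add_0_right length_Cons nth_Cons_0 zero_less_Suc)
  then have "tm_step M (s, l, []) = (Suc s, x # l, [])"
    using tm_step_R[of M s "[]"] by simp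
  moreover have "\<forall>i<length v. \<forall>a. snd M (Suc s + i) a = Some (Suc (Suc s + i), v ! i, R)"
    using Cons.prems by (metis add_Suc_right length_Cons nth_Cons_Suc Suc_less_eq add_Suc)
  ultimately show ?case
    using Cons.IH[of "Suc s" "x # l"] by (simp only: length_Cons funpow_Suc_right o_apply) simp
qed

lemma tm_steps_move_left:
  assumes "\<forall>j<c. \<forall>a. snd M (s + j) a = Some (Suc (s + j), a, L)" and "c \<le> length l"
  shows "(tm_step M ^^ c) (s, l, r) =
    (s + c, drop c l, rev (take c l) @ (if c = 0 then r else pad_head r))"
  using assms
proof (induction c arbitrary: s l r)
  case 0
  then show ?case by simp
next
  case (Suc c)
  obtain a l' where l: "l = a # l'" using Suc.prems(2) by (cases l) auto
  have "snd M s (head_sym r) = Some (Suc s, head_sym r, L)"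
    using Suc.prems(1) by (metis add_0_right zero_less_Suc)
  then have step: "tm_step M (s, l, r) = (Suc s, l', a # pad_head r)"
    using tm_step_L l by simp
  have "\<forall>j<c. \<forall>a. snd M (Suc s + j) a = Some (Suc (Suc s + j), a, L)"
    using Suc.prems(1) by (metis Suc_less_eq add_Suc add_Suc_right)
  then have "(tm_step M ^^ c) (Suc s, l', a # pad_head r) =
      (Suc s + c, drop c l', rev (take c l') @ (a # pad_head r))"
    using Suc.IH Suc.prems(2) l by simp
  then show ?case using step l by (simp only: funpow_Suc_right o_apply) simp
qed

lemma tm_steps_scan_right:
  assumes "\<forall>b. snd M s (Bit b) = Some (s, Bit b, R)"
  shows "(tm_step M ^^ length z) (s, l, map Bit z) = (s, rev (map Bit z) @ l, [])"
  using assms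
proof (induction z arbitrary: l)
  case Nil
  then show ?case by simp
next
  case (Cons x z)
  have "tm_step M (s, l, map Bit (x # z)) = (s, Bit x # l, map Bit z)"
    using tm_step_R[of M s "map Bit (x # z)"] Cons.prems by simp
  then show ?case
    using Cons.IH[OF Cons.prems, of "Bit x # l"]
    by (simp only: length_Cons funpow_Suc_right o_apply list.map) simp
qed

lemma tm_steps_rewind:
  assumes "\<forall>b. snd M s (Bit b) = Some (s, Bit b, L)"
  shows "(tm_step M ^^ Suc (length z)) (s, rev (m # map Bit z), Bit c # t) =
    (s, [], m # map Bit z @ Bit c # t)"
  using assms
proof (induction z arbitrary: c t rule: rev_induct)
  case Nil
  have "tm_step M (s, [m], Bit c # t) = (s, [], m # Bit c # t)"
    using tm_step_L[of M s "Bit c # t" s m "[]"] Nil.prems by simp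
  then show ?case by simp
next
  case (snoc x z)
  have "tm_step M (s, rev (m # map Bit (z @ [x])), Bit c # t) =
      (s, rev (m # map Bit z), Bit x # Bit c # t)"
    using tm_step_L[of M s "Bit c # t" s "Bit x" "rev (m # map Bit z)"] snoc.prems by simp
  then show ?case
    using snoc.IH[OF snoc.prems, of x "Bit c # t"]
    by (simp only: length_append_singleton funpow_Suc_right o_apply) simp
qed

lemma first_halting_step:
  assumes "halted A ((tm_step A ^^ s) c)"
  obtains s0 where "s0 \<le> s" and "\<forall>i<s0. \<not> halted A ((tm_step A ^^ i) c)"
    and "(tm_step A ^^ s0) c = (tm_step A ^^ s) c"
proof -
  define s0 where "s0 = (LEAST i. halted A ((tm_step A ^^ i) c))"
  have halt: "halted A ((tm_step A ^^ s0) c)" unfolding s0_def using assms by (rule LeastI)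
  have le: "s0 \<le> s" unfolding s0_def using assms by (rule Least_le)
  have "(tm_step A ^^ s) c = (tm_step A ^^ (s - s0)) ((tm_step A ^^ s0) c)"
    using le by (metis funpow_add le_add_diff_inverse2 o_apply)
  then have "(tm_step A ^^ s0) c = (tm_step A ^^ s) c"
    using tm_steps_halted[OF halt] by simp
  moreover have "\<forall>i<s0. \<not> halted A ((tm_step A ^^ i) c)"
    unfolding s0_def using not_less_Least by blast
  ultimately show thesis using le that by blast
qed

lemma tm_step_preserves_wf_state: "tm_wf A \<Longrightarrow> fst c < fst A \<Longrightarrow> fst (tm_step A c) < fst A"
  by (cases c) (auto simp: tm_wf_def split: option.splits prod.splits)

lemma accepts_within_iff:
  "accepts_within M x t \<longleftrightarrow> halts_within M x t \<and> head_sym (snd (snd (conf M x t))) = Bit True"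
  unfolding accepts_within_def by (cases "conf M x t") auto

lemma rejects_within_iff:
  "rejects_within M x t \<longleftrightarrow> halts_within M x t \<and> head_sym (snd (snd (conf M x t))) \<noteq> Bit True"
  unfolding rejects_within_def by (cases "conf M x t") auto

section \<open>Sequential composition\<close>

definition tm_seq :: "tm \<Rightarrow> tm \<Rightarrow> tm" where
  "tm_seq A B = (fst A + fst B, \<lambda>q a. if q < fst A then
      (case snd A q a of None \<Rightarrow> Some (fst A, a, S) | Some x \<Rightarrow> Some x)
     else map_option (\<lambda>(q', b, d). (q' + fst A, b, d)) (snd B (q - fst A) a))"

fun shift_state :: "nat \<Rightarrow> config \<Rightarrow> config" where
  "shift_state n (q, l, r) = (q + n, l, r)"

lemma shift_state_conv: "shift_state n c = (fst c + n, snd c)"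
  by (cases c) auto

lemma tm_wf_seq:
  assumes A: "tm_wf A" and B: "tm_wf B"
  shows "tm_wf (tm_seq A B)"
  unfolding tm_wf_def
proof (intro conjI allI impI)
  show "0 < fst (tm_seq A B)" using A by (simp add: tm_wf_def tm_seq_def)
next
  fix q a q' b d
  assume q: "q < fst (tm_seq A B)" and step: "snd (tm_seq A B) q a = Some (q', b, d)"
  show "q' < fst (tm_seq A B)"
  proof (cases "q < fst A")
    case True
    then have "q' \<le> fst A"
      using step A by (fastforce simp: tm_seq_def tm_wf_def split: option.splits)
    then show ?thesis using B by (simp add: tm_seq_def tm_wf_def)
  next
    case False
    then obtain q'' where step_B: "snd B (q - fst A) a = Some (q'', b, d)" and "q' = q'' + fst A"
      using step by (auto simp: tm_seq_def)
    moreover have "q - fst A < fst B" using q False by (simp add: tm_seq_def)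
    ultimately show ?thesis using B unfolding tm_wf_def tm_seq_def by fastforce
  qed
qed

lemma tm_step_seq_second:
  "tm_step (tm_seq A B) (shift_state (fst A) c) = shift_state (fst A) (tm_step B c)"
proof -
  obtain q l r where "c = (q, l, r)" by (cases c)
  then show ?thesis
    by (cases "snd B q (head_sym r)") (auto simp: tm_seq_def case_prod_beta shift_state_conv)
qed

lemma tm_steps_seq_second:
  "(tm_step (tm_seq A B) ^^ n) (shift_state (fst A) c) = shift_state (fst A) ((tm_step B ^^ n) c)"
  by (induction n) (auto simp: tm_step_seq_second)

lemma halted_seq_second: "halted (tm_seq A B) (shift_state (fst A) c) = halted B c"
  by (cases c) (auto simp: tm_seq_def)

lemma head_sym_shift_state: "head_sym (snd (snd (shift_state n c))) = head_sym (snd (snd c))"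
  by (cases c) auto

lemma tm_steps_seq_first:
  assumes "tm_wf A" and "fst c < fst A" and "\<forall>i<s. \<not> halted A ((tm_step A ^^ i) c)"
  shows "(tm_step (tm_seq A B) ^^ s) c = (tm_step A ^^ s) c \<and> fst ((tm_step A ^^ s) c) < fst A"
  using assms(3)
proof (induction s)
  case 0
  then show ?case using assms(2) by simp
next
  case (Suc s)
  obtain q l r where c_s: "(tm_step A ^^ s) c = (q, l, r)" by (cases "(tm_step A ^^ s) c")
  have "(tm_step (tm_seq A B) ^^ s) c = (q, l, r)" and "q < fst A"
    using Suc c_s by auto
  moreover have "\<not> halted A (q, l, r)" using Suc.prems c_s by auto
  ultimately show ?case
    using c_s tm_step_preserves_wf_state[OF assms(1), of "(q, l, r)"]
    by (auto simp: tm_seq_def split: option.splits)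
qed

lemma tm_steps_seq_handoff:
  assumes "tm_wf A" and "fst c < fst A"
    and "halted A ((tm_step A ^^ s) c)" and "(tm_step A ^^ s) c = (q, l, r)"
  obtains s0 where "s0 \<le> s"
    and "(tm_step (tm_seq A B) ^^ Suc s0) c = shift_state (fst A) (0, l, pad_head r)"
proof -
  obtain s0 where "s0 \<le> s" and no_halt: "\<forall>i<s0. \<not> halted A ((tm_step A ^^ i) c)"
    and run_A: "(tm_step A ^^ s0) c = (q, l, r)"
    using first_halting_step[OF assms(3)] assms(4) by metis
  have run_seq: "(tm_step (tm_seq A B) ^^ s0) c = (q, l, r)" and "q < fst A"
    using tm_steps_seq_first[OF assms(1,2) no_halt, of B] run_A by auto
  moreover have "snd A q (head_sym r) = None" using assms(3,4) by simp
  ultimately have "snd (tm_seq A B) q (head_sym r) = Some (fst A, head_sym r, S)"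
    by (simp add: tm_seq_def)
  then have "tm_step (tm_seq A B) (q, l, r) = (fst A, l, pad_head r)"
    using tm_step_S by (simp add: pad_head_def)
  then have "(tm_step (tm_seq A B) ^^ Suc s0) c = shift_state (fst A) (0, l, pad_head r)"
    using run_seq by simp
  with \<open>s0 \<le> s\<close> show thesis by (rule that)
qed

section \<open>Tapes up to trailing blanks, and their growth\<close>

definition tape_cell :: "sym list \<Rightarrow> nat \<Rightarrow> sym" where
  "tape_cell r i = (if i < length r then r ! i else Bl)"

definition tape_eq :: "sym list \<Rightarrow> sym list \<Rightarrow> bool" where
  "tape_eq r r' \<longleftrightarrow> (\<forall>i. tape_cell r i = tape_cell r' i)"

fun config_eq :: "config \<Rightarrow> config \<Rightarrow> bool" where
  "config_eq (q, l, r) (q', l', r') \<longleftrightarrow> q = q' \<and> l = l' \<and> tape_eq r r'"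

lemma tape_eq_head_sym: "tape_eq r r' \<Longrightarrow> head_sym r = head_sym r'"
  unfolding tape_eq_def by (cases r; cases r') (auto simp: tape_cell_def dest: spec[of _ 0])

lemma tape_eq_tl: "tape_eq r r' \<Longrightarrow> tape_eq (tl r) (tl r')"
proof -
  have "tape_cell (tl r) i = tape_cell r (Suc i)" for r i
    by (cases r) (auto simp: tape_cell_def)
  then show "tape_eq r r' \<Longrightarrow> tape_eq (tl r) (tl r')" by (simp add: tape_eq_def)
qed

lemma tape_eq_Cons: "tape_eq r r' \<Longrightarrow> tape_eq (a # r) (a # r')"
proof -
  have "tape_cell (a # r) i = (if i = 0 then a else tape_cell r (i - 1))" for r i
    by (cases i) (auto simp: tape_cell_def)
  then show "tape_eq r r' \<Longrightarrow> tape_eq (a # r) (a # r')" by (simp add: tape_eq_def)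
qed

lemma tape_eq_trans: "tape_eq r r' \<Longrightarrow> tape_eq r' r'' \<Longrightarrow> tape_eq r r''"
  by (simp add: tape_eq_def)

lemma tape_eq_pad_head: "tape_eq (pad_head r) r"
  by (cases r) (auto simp: tape_eq_def tape_cell_def nth_Cons split: nat.splits)

lemma tape_eq_append_blanks: "tape_eq (r @ replicate k Bl) r"
  by (auto simp: tape_eq_def tape_cell_def nth_append)

lemma move_tape_eq:
  "tape_eq r r' \<Longrightarrow> move d l (b # r) = (l1, r1) \<Longrightarrow> move d l (b # r') = (l2, r2) \<Longrightarrow>
   l1 = l2 \<and> tape_eq r1 r2"
  by (cases d; cases l) (auto simp: tape_eq_Cons)

lemma tm_step_config_eq: "config_eq c c' \<Longrightarrow> config_eq (tm_step M c) (tm_step M c')"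
proof -
  assume eq: "config_eq c c'"
  obtain q l r where c: "c = (q, l, r)" by (cases c)
  obtain r' where c': "c' = (q, l, r')" and r: "tape_eq r r'" using eq c by (cases c') auto
  have head: "head_sym r = head_sym r'" using tape_eq_head_sym[OF r] .
  show ?thesis
  proof (cases "snd M q (head_sym r)")
    case None
    then show ?thesis using c c' head r by simp
  next
    case (Some x)
    obtain q' b d where x: "x = (q', b, d)" by (cases x)
    obtain l1 r1 where m1: "move d l (b # tl r) = (l1, r1)" by fastforce
    obtain l2 r2 where m2: "move d l (b # tl r') = (l2, r2)" by fastforce
    show ?thesis using Some x c c' head m1 m2 move_tape_eq[OF tape_eq_tl[OF r] m1 m2] by simp
  qed
qed

lemma tm_steps_config_eq:
  "config_eq c c' \<Longrightarrow> config_eq ((tm_step M ^^ n) c) ((tm_step M ^^ n) c')"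
  by (induction n) (auto simp: tm_step_config_eq)

lemma config_eq_halted: "config_eq c c' \<Longrightarrow> halted M c = halted M c'"
  by (cases c; cases c') (auto dest: tape_eq_head_sym)

lemma config_eq_head_sym: "config_eq c c' \<Longrightarrow> head_sym (snd (snd c)) = head_sym (snd (snd c'))"
  by (cases c; cases c') (auto dest: tape_eq_head_sym)

lemma config_eq_trans: "config_eq c c' \<Longrightarrow> config_eq c' c'' \<Longrightarrow> config_eq c c''"
  by (cases c; cases c'; cases c'') (auto intro: tape_eq_trans)

lemma config_eq_shift_state: "config_eq c c' \<Longrightarrow> config_eq (shift_state n c) (shift_state n c')"
  by (cases c; cases c') auto

fun tape_size :: "config \<Rightarrow> nat" where
  "tape_size (q, l, r) = length l + length r"

lemma tape_size_tm_step: "tape_size (tm_step M c) \<le> Suc (tape_size c)"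
proof -
  obtain q l r where c: "c = (q, l, r)" by (cases c)
  show ?thesis
  proof (cases "snd M q (head_sym r)")
    case None
    then show ?thesis using c by simp
  next
    case (Some x)
    obtain q' b d where x: "x = (q', b, d)" by (cases x)
    have "length (fst (move d l (b # tl r))) + length (snd (move d l (b # tl r))) =
        length l + Suc (length (tl r))"
      by (cases "(d, l, b # tl r)" rule: move.cases) auto
    moreover have "tape_size c' = length (fst (snd c')) + length (snd (snd c'))" for c'
      by (cases c') auto
    ultimately show ?thesis using Some x c by (simp add: case_prod_beta)
  qed
qed

lemma tape_size_tm_steps: "tape_size ((tm_step M ^^ n) c) \<le> tape_size c + n"
proof (induction n)
  case 0
  then show ?case by simp
next
  case (Suc n)
  then show ?case using tape_size_tm_step[of M "(tm_step M ^^ n) c"] by simp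
qed

lemma computes_within_output_length:
  assumes "computes_within M x s y"
  shows "length y \<le> length x + s"
proof -
  obtain q l r where c: "conf M x s = (q, l, r)" by (cases "conf M x s")
  then obtain k where "r = map Bit y @ replicate k Bl"
    using assms by (auto simp: computes_within_def)
  moreover have "tape_size (conf M x s) \<le> tape_size (0, [], x) + s"
    unfolding conf_def by (rule tape_size_tm_steps)
  ultimately show ?thesis using c by simp
qed

section \<open>Appending a fixed suffix to the input\<close>

text \<open>With \<open>k = |u|\<close>: state 0 overwrites the first input symbol by a marker (\<open>Bl\<close> for 1,
  \<open>Hash\<close> for 0) so that the left end can be found again; state 1 scans to the end of the
  input; states \<open>2..<2+k\<close> write \<open>u\<close> after a \<open>Hash\<close>; states \<open>2+k..<4+2k\<close> step back onto the last
  input symbol; state \<open>4+2k\<close> runs left to the marker and restores it. On empty input,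
  state 0 writes \<open>Hash\<close>, states \<open>5+2k..<5+3k\<close> write \<open>u\<close> and states \<open>5+3k..<6+4k\<close> step back.
  State \<open>6+4k\<close> halts.\<close>

definition append_delta :: "sym list \<Rightarrow> nat \<Rightarrow> sym \<Rightarrow> (nat \<times> sym \<times> dir) option" where
  "append_delta u q a = (let k = length u in
     if q = 0 then (case a of Bit b \<Rightarrow> Some (1, if b then Bl else Hash, R)
                            | Bl \<Rightarrow> Some (5 + 2*k, Hash, R) | Hash \<Rightarrow> None)
     else if q = 1 then (case a of Bit b \<Rightarrow> Some (1, Bit b, R) | Bl \<Rightarrow> Some (2, Hash, R)
                                 | Hash \<Rightarrow> None)
     else if q < 2 + k then Some (Suc q, u ! (q - 2), R)
     else if q < 4 + 2*k then Some (Suc q, a, L)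
     else if q = 4 + 2*k then (case a of Bit b \<Rightarrow> Some (4 + 2*k, Bit b, L)
                                       | Hash \<Rightarrow> Some (6 + 4*k, Bit False, S)
                                       | Bl \<Rightarrow> Some (6 + 4*k, Bit True, S))
     else if q < 5 + 3*k then Some (Suc q, u ! (q - (5 + 2*k)), R)
     else if q < 6 + 4*k then Some (Suc q, a, L)
     else None)"

definition append_tm :: "sym list \<Rightarrow> tm" where
  "append_tm u = (7 + 4 * length u, append_delta u)"

definition left_marker :: "bool \<Rightarrow> sym" where
  "left_marker b = (if b then Bl else Hash)"

lemma tm_wf_append_tm: "tm_wf (append_tm u)"
  unfolding tm_wf_def append_tm_def append_delta_def Let_def
  by (auto split: sym.splits if_splits)

lemma halted_append_tm: "halted (append_tm u) (6 + 4 * length u, l, r)"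
  by (simp add: append_tm_def append_delta_def Let_def)

lemma append_tm_run_Nil:
  "(tm_step (append_tm u) ^^ (2 * length u + 2)) (0, [], []) =
    (6 + 4 * length u, [], Hash # u @ [Bl])"
proof -
  let ?k = "length u" and ?M = "append_tm u"
  have start: "tm_step ?M (0, [], []) = (5 + 2 * ?k, [Hash], [])"
    by (simp add: append_tm_def append_delta_def Let_def)
  have write_u: "(tm_step ?M ^^ ?k) (5 + 2 * ?k, [Hash], []) = (5 + 3 * ?k, rev u @ [Hash], [])"
    using tm_steps_write[of u ?M "5 + 2 * ?k" "[Hash]"]
    by (simp add: append_tm_def append_delta_def Let_def)
  have rewind: "(tm_step ?M ^^ Suc ?k) (5 + 3 * ?k, rev u @ [Hash], []) =
      (6 + 4 * ?k, [], Hash # u @ [Bl])"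
    using tm_steps_move_left[of "Suc ?k" ?M "5 + 3 * ?k" "rev u @ [Hash]" "[]"]
    by (simp add: append_tm_def append_delta_def Let_def)
  have "(tm_step ?M ^^ (2 * ?k + 2)) (0, [], []) =
      (tm_step ?M ^^ Suc ?k) ((tm_step ?M ^^ ?k) (tm_step ?M (0, [], [])))"
    by (simp only: funpow_add funpow_Suc_right o_apply mult_2 add_2_eq_Suc' add_Suc_right)
       (simp add: funpow_swap1)
  then show ?thesis using start write_u rewind by simp
qed

lemma append_tm_run_prefix:
  "(tm_step (append_tm u) ^^ (length x' + 2 + length u)) (0, [], map Bit (b # x')) =
    (2 + length u, rev (left_marker b # map Bit x' @ Hash # u), [])"
proof -
  let ?k = "length u" and ?M = "append_tm u"
  have mark: "tm_step ?M (0, [], map Bit (b # x')) = (1, [left_marker b], map Bit x')"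
    by (simp add: append_tm_def append_delta_def Let_def left_marker_def)
  have scan: "(tm_step ?M ^^ length x') (1, [left_marker b], map Bit x') =
      (1, rev (map Bit x') @ [left_marker b], [])"
    using tm_steps_scan_right[of ?M 1 x' "[left_marker b]"]
    by (simp add: append_tm_def append_delta_def Let_def)
  have sep: "tm_step ?M (1, rev (map Bit x') @ [left_marker b], []) =
      (2, Hash # rev (map Bit x') @ [left_marker b], [])"
    by (simp add: append_tm_def append_delta_def Let_def)
  have write_u: "(tm_step ?M ^^ ?k) (2, Hash # rev (map Bit x') @ [left_marker b], []) =
      (2 + ?k, rev u @ Hash # rev (map Bit x') @ [left_marker b], [])"
    using tm_steps_write[of u ?M 2 "Hash # rev (map Bit x') @ [left_marker b]"]
    by (simp add: append_tm_def append_delta_def Let_def)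
  have "length x' + 2 + ?k = ?k + (1 + (length x' + 1))" by simp
  then have "(tm_step ?M ^^ (length x' + 2 + ?k)) (0, [], map Bit (b # x')) =
      (tm_step ?M ^^ ?k) (tm_step ?M ((tm_step ?M ^^ length x') (tm_step ?M (0, [], map Bit (b # x')))))"
    by (simp only: funpow_add o_apply) simp
  then show ?thesis using mark scan sep write_u by simp
qed

lemma append_tm_run_Cons:
  "\<exists>s\<le>2 * length x + 2 * length u + 6.
    (tm_step (append_tm u) ^^ s) (0, [], map Bit x) =
      (6 + 4 * length u, [], map Bit x @ Hash # u @ [Bl])"
  if "x \<noteq> []"
proof -
  let ?k = "length u" and ?M = "append_tm u"
  obtain b x' where x: "x = b # x'" using \<open>x \<noteq> []\<close> by (cases x) auto
  have prefix: "(tm_step ?M ^^ (length x' + 2 + ?k)) (0, [], map Bit x) =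
      (2 + ?k, rev (left_marker b # map Bit x' @ Hash # u), [])"
    using append_tm_run_prefix x by simp
  have step_left: "\<forall>j<?k + 2. \<forall>a. snd ?M (2 + ?k + j) a = Some (Suc (2 + ?k + j), a, L)"
    by (simp add: append_tm_def append_delta_def Let_def)
  have restore: "tm_step ?M (4 + 2 * ?k, [], left_marker b # t) = (6 + 4 * ?k, [], Bit b # t)" for t
    by (cases b) (simp_all add: append_tm_def append_delta_def Let_def left_marker_def)
  show ?thesis
  proof (cases x' rule: rev_cases)
    case Nil
    have "(tm_step ?M ^^ (?k + 2)) (2 + ?k, rev (left_marker b # map Bit x' @ Hash # u), []) =
        (4 + 2 * ?k, [], left_marker b # Hash # u @ [Bl])"
      using tm_steps_move_left[OF step_left, of "rev (left_marker b # map Bit x' @ Hash # u)" "[]"]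
        Nil by simp
    then have "(tm_step ?M ^^ (1 + (?k + 2) + (length x' + 2 + ?k))) (0, [], map Bit x) =
        (6 + 4 * ?k, [], map Bit x @ Hash # u @ [Bl])"
      using prefix restore x Nil by (simp only: funpow_add o_apply) simp
    then show ?thesis using x Nil by (intro exI[of _ "1 + (?k + 2) + (length x' + 2 + ?k)"]) simp
  next
    case (snoc y c)
    have "(tm_step ?M ^^ (?k + 2)) (2 + ?k, rev (left_marker b # map Bit x' @ Hash # u), []) =
        (4 + 2 * ?k, rev (left_marker b # map Bit y), Bit c # Hash # u @ [Bl])"
      using tm_steps_move_left[OF step_left, of "rev (left_marker b # map Bit x' @ Hash # u)" "[]"]
        snoc by simp
    moreover have "(tm_step ?M ^^ Suc (length y))
          (4 + 2 * ?k, rev (left_marker b # map Bit y), Bit c # Hash # u @ [Bl]) =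
        (4 + 2 * ?k, [], left_marker b # map Bit y @ Bit c # Hash # u @ [Bl])"
      by (rule tm_steps_rewind) (simp add: append_tm_def append_delta_def Let_def)
    ultimately have "(tm_step ?M ^^ (1 + Suc (length y) + (?k + 2) + (length x' + 2 + ?k)))
          (0, [], map Bit x) = (6 + 4 * ?k, [], map Bit x @ Hash # u @ [Bl])"
      using prefix restore x snoc by (simp only: funpow_add o_apply) simp
    then show ?thesis
      using x snoc by (intro exI[of _ "1 + Suc (length y) + (?k + 2) + (length x' + 2 + ?k)"]) simp
  qed
qed

lemma append_tm_run:
  obtains s where "s \<le> 2 * length x + 2 * length u + 6"
    and "(tm_step (append_tm u) ^^ s) (0, [], map Bit x) =
      (6 + 4 * length u, [], map Bit x @ Hash # u @ [Bl])"
proof (cases "x = []")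
  case True
  then show thesis using append_tm_run_Nil[of u] that[of "2 * length u + 2"] by simp
next
  case False
  then show thesis using append_tm_run_Cons that by blast
qed

lemma tm_seq_compute_then_run:
  assumes "tm_wf M" and "computes_within M x s y"
  obtains s0 where "s0 \<le> s"
    and "config_eq ((tm_step (tm_seq M M1) ^^ (s1 + Suc s0)) (0, [], x))
      (shift_state (fst M) (conf M1 (enc_word y) s1))"
proof -
  obtain q k where run: "(tm_step M ^^ s) (0, [], x) = (q, [], map Bit y @ replicate k Bl)"
    and halt: "halted M ((tm_step M ^^ s) (0, [], x))"
    using assms(2) unfolding computes_within_def halts_within_def conf_def
    by (auto split: prod.splits)
  have "fst (0::nat, [] :: sym list, x) < fst M" using assms(1) by (simp add: tm_wf_def)
  then obtain s0 where "s0 \<le> s" and handoff: "(tm_step (tm_seq M M1) ^^ Suc s0) (0, [], x) =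
      shift_state (fst M) (0, [], pad_head (map Bit y @ replicate k Bl))"
    by (rule tm_steps_seq_handoff[OF assms(1) _ halt run])
  have "config_eq (0, [], pad_head (map Bit y @ replicate k Bl)) (0, [], enc_word y)"
    by (simp add: enc_word_def tape_eq_trans[OF tape_eq_pad_head tape_eq_append_blanks])
  then have "config_eq ((tm_step M1 ^^ s1) (0, [], pad_head (map Bit y @ replicate k Bl)))
      (conf M1 (enc_word y) s1)"
    unfolding conf_def by (rule tm_steps_config_eq)
  moreover have "(tm_step (tm_seq M M1) ^^ (s1 + Suc s0)) (0, [], x) =
      shift_state (fst M) ((tm_step M1 ^^ s1) (0, [], pad_head (map Bit y @ replicate k Bl)))"
    unfolding funpow_add o_apply handoff by (rule tm_steps_seq_second)
  ultimately show thesis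
    using that[OF \<open>s0 \<le> s\<close>] by (simp only: config_eq_shift_state)
qed

lemma append_compute_decide_run:
  assumes "tm_wf M" and "computes_within M (map Bit x @ Hash # u) s y"
    and "halts_within M1 (enc_word y) s1"
  defines "M0 \<equiv> tm_seq (append_tm u) (tm_seq M M1)"
  obtains T where "T \<le> 2 * length x + 2 * length u + 8 + s + s1"
    and "halts_within M0 (enc_word x) T"
    and "head_sym (snd (snd (conf M0 (enc_word x) T))) = head_sym (snd (snd (conf M1 (enc_word y) s1)))"
proof -
  let ?A = "append_tm u" and ?E = "map Bit x @ Hash # u" and ?F = "map Bit x @ Hash # u @ [Bl]"
  obtain sA where sA: "sA \<le> 2 * length x + 2 * length u + 6"
    and run_A: "(tm_step ?A ^^ sA) (0, [], map Bit x) = (6 + 4 * length u, [], ?F)"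
    by (rule append_tm_run)
  have "fst (0::nat, [] :: sym list, map Bit x) < fst ?A" by (simp add: append_tm_def)
  moreover have "halted ?A ((tm_step ?A ^^ sA) (0, [], map Bit x))"
    unfolding run_A by (rule halted_append_tm)
  ultimately obtain s0A where s0A: "s0A \<le> sA" and handoff_raw:
      "(tm_step M0 ^^ Suc s0A) (0, [], map Bit x) = shift_state (fst ?A) (0, [], pad_head ?F)"
    unfolding M0_def by (rule tm_steps_seq_handoff[OF tm_wf_append_tm _ _ run_A])
  have "pad_head ?F = ?F" by (cases x) auto
  with handoff_raw have handoff:
      "(tm_step M0 ^^ Suc s0A) (0, [], map Bit x) = shift_state (fst ?A) (0, [], ?F)"
    by simp
  obtain s0 where s0: "s0 \<le> s" and run_MM:
      "config_eq ((tm_step (tm_seq M M1) ^^ (s1 + Suc s0)) (0, [], ?E))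
        (shift_state (fst M) (conf M1 (enc_word y) s1))"
    by (rule tm_seq_compute_then_run[OF assms(1,2)])
  define T where "T = (s1 + Suc s0) + Suc s0A"
  have T: "T \<le> 2 * length x + 2 * length u + 8 + s + s1" using sA s0A s0 by (simp add: T_def)
  have "config_eq (0, [], ?F) (0, [], ?E)"
    using tape_eq_append_blanks[of ?E 1] by simp
  then have "config_eq ((tm_step (tm_seq M M1) ^^ (s1 + Suc s0)) (0, [], ?F))
      (shift_state (fst M) (conf M1 (enc_word y) s1))"
    by (rule config_eq_trans[OF tm_steps_config_eq run_MM])
  moreover have "conf M0 (enc_word x) T =
      shift_state (fst ?A) ((tm_step (tm_seq M M1) ^^ (s1 + Suc s0)) (0, [], ?F))"
    unfolding conf_def T_def enc_word_def funpow_add[of "s1 + Suc s0" "Suc s0A"] o_apply handoff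
    unfolding M0_def
    by (rule tm_steps_seq_second)
  ultimately have final: "config_eq (conf M0 (enc_word x) T)
      (shift_state (fst ?A) (shift_state (fst M) (conf M1 (enc_word y) s1)))"
    by (simp add: config_eq_shift_state)
  have "halts_within M0 (enc_word x) T"
    using assms(3) config_eq_halted[OF final]
    by (simp add: halts_within_def halted_seq_second M0_def)
  moreover have "head_sym (snd (snd (conf M0 (enc_word x) T))) =
      head_sym (snd (snd (conf M1 (enc_word y) s1)))"
    using config_eq_head_sym[OF final] by (simp add: head_sym_shift_state)
  ultimately show thesis by (rule that[OF T])
qed

lemma powr_le_of_le_poly:
  fixes L a n B :: real
  assumes "1 \<le> n" and "1 \<le> L" and "L \<le> a * n ^ (d + 1)" and "0 \<le> B"
  shows "L powr (B / (real d + 1)) \<le> a powr (B / (real d + 1)) * n powr B"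
proof -
  have n_pow: "n ^ (d + 1) = n powr (real d + 1)"
    using powr_realpow[of n "d + 1"] assms(1) by (simp add: add.commute)
  have "0 \<le> a"
    using assms(1-3) by (smt (verit, best) mult_nonpos_nonneg one_le_power)
  have "L powr (B / (real d + 1)) \<le> (a * n ^ (d + 1)) powr (B / (real d + 1))"
    using assms(2-4) by (intro powr_mono2) auto
  also have "\<dots> = a powr (B / (real d + 1)) * (n ^ (d + 1)) powr (B / (real d + 1))"
    using \<open>0 \<le> a\<close> assms(1) by (simp add: powr_mult)
  also have "\<dots> = a powr (B / (real d + 1)) * n powr B"
    unfolding n_pow by (simp add: powr_powr)
  finally show ?thesis .
qed

lemma composed_time_bound:
  fixes n B t s U L C s1 T :: real and d :: nat
  assumes n: "1 \<le> n" and B: "real d + 1 \<le> B" and t: "0 \<le> t" and U: "0 \<le> U"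
    and s: "s \<le> t * n ^ d" and L: "1 \<le> L" "L \<le> n + U + 2 + s"
    and s1: "s1 \<le> C * L powr (B / (real d + 1))"
    and T: "T \<le> 2 * n + 2 * U + 8 + s + s1"
  shows "T \<le> ((2 * U + 10 + t) + \<bar>C\<bar> * (U + 3 + t) powr (B / (real d + 1))) * n powr B"
proof -
  define P where "P = n ^ (d + 1)"
  have "1 \<le> P" unfolding P_def using n by (rule one_le_power)
  have "n \<le> P" unfolding P_def using n by (metis power_increasing le_add2 power_one_right)
  have "t * n ^ d \<le> t * P" unfolding P_def using n t by (simp add: power_increasing mult_left_mono)
  have "P \<le> n powr B"
  proof -
    have "P = n powr (real (d + 1))" unfolding P_def using powr_realpow[of n "d + 1"] n by simp
    also have "\<dots> \<le> n powr B" using n B by (intro powr_mono) auto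
    finally show ?thesis .
  qed
  have "L \<le> P + (U + 2) * P + t * P"
    using L s \<open>t * n ^ d \<le> t * P\<close> \<open>n \<le> P\<close> \<open>1 \<le> P\<close> U
    by (smt (verit) mult_le_cancel_left1 mult_nonneg_nonneg)
  then have "L \<le> (U + 3 + t) * P" by (simp add: algebra_simps)
  then have "L powr (B / (real d + 1)) \<le> (U + 3 + t) powr (B / (real d + 1)) * n powr B"
    unfolding P_def using n L B by (intro powr_le_of_le_poly) auto
  then have "s1 \<le> \<bar>C\<bar> * ((U + 3 + t) powr (B / (real d + 1)) * n powr B)"
    using s1 abs_ge_self[of C]
    by (meson abs_ge_zero mult_left_mono mult_right_mono order_trans powr_ge_zero)
  moreover have "2 * n + 2 * U + 8 + s \<le> (2 * U + 10 + t) * n powr B"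
  proof -
    have "2 * n + 2 * U + 8 + s \<le> 2 * P + (2 * U + 8) * P + t * P"
      using s \<open>t * n ^ d \<le> t * P\<close> \<open>n \<le> P\<close> \<open>1 \<le> P\<close> U
      by (smt (verit) mult_le_cancel_left1 mult_nonneg_nonneg)
    also have "\<dots> = (2 * U + 10 + t) * P" by (simp add: algebra_simps)
    also have "\<dots> \<le> (2 * U + 10 + t) * n powr B"
      using \<open>P \<le> n powr B\<close> U t by (intro mult_left_mono) auto
    finally show ?thesis .
  qed
  ultimately show ?thesis using T by (simp add: algebra_simps)
qed

section \<open>Transferring gap deciders along a reduction\<close>

text \<open>\<open>M\<close>, given an instance of \<open>P0\<close> followed by the parameters \<open>Q, r\<close>, computes in time
  \<open>t |I|\<^bsup>d\<^esup>\<close> an instance of \<open>P1\<close>, mapping the gap \<open>(p, Q)\<close> of \<open>P0\<close> into the gap \<open>(r, q)\<close> of \<open>P1\<close>.\<close>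

definition gap_reduction_at ::
  "tm \<Rightarrow> nat \<Rightarrow> nat \<Rightarrow> opt_problem \<Rightarrow> opt_problem \<Rightarrow> nat \<Rightarrow> nat \<Rightarrow> nat \<Rightarrow> nat \<Rightarrow> bool" where
  "gap_reduction_at M t d P0 P1 Q r p q \<longleftrightarrow>
     (\<forall>I0\<in>inst P0. \<exists>I1 s. s \<le> t * max 1 (length I0) ^ d \<and>
        computes_within M (enc3 I0 Q r) s I1 \<and> I1 \<in> inst P1 \<and>
        (opt P0 I0 \<ge> real Q \<longrightarrow> opt P1 I1 \<ge> real q) \<and>
        (opt P0 I0 < real p \<longrightarrow> opt P1 I1 < real r))"

lemma fpt_gap_reducibleE:
  assumes "fpt_gap_reducible f g P0 P1"
  obtains M t d where "tm_wf M"
    and "\<And>Q r q. 0 < Q \<Longrightarrow> 0 < r \<Longrightarrow> q \<le> f Q \<Longrightarrow> gap_reduction_at M (t Q r) d P0 P1 Q r (g r) q"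
proof -
  obtain M t d where "tm_wf M" and red: "\<forall>I0\<in>inst P0. \<forall>Q r. 0 < Q \<longrightarrow> 0 < r \<longrightarrow>
      (\<exists>I1 s. s \<le> t Q r * max 1 (length I0) ^ d \<and> computes_within M (enc3 I0 Q r) s I1 \<and>
        I1 \<in> inst P1 \<and> (opt P0 I0 \<ge> real Q \<longrightarrow> opt P1 I1 \<ge> real (f Q)) \<and>
        (opt P0 I0 < real (g r) \<longrightarrow> opt P1 I1 < real r))"
    using assms unfolding fpt_gap_reducible_def by blast
  have "gap_reduction_at M (t Q r) d P0 P1 Q r (g r) q" if Q: "0 < Q" and r: "0 < r" and q: "q \<le> f Q" for Q r q
    unfolding gap_reduction_at_def
  proof
    fix I0 assume "I0 \<in> inst P0"
    then obtain I1 s where "s \<le> t Q r * max 1 (length I0) ^ d"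
      and "computes_within M (enc3 I0 Q r) s I1" and "I1 \<in> inst P1"
      and "opt P0 I0 \<ge> real Q \<longrightarrow> opt P1 I1 \<ge> real (f Q)"
      and "opt P0 I0 < real (g r) \<longrightarrow> opt P1 I1 < real r"
      using red Q r by blast
    moreover have "real q \<le> real (f Q)" using q by simp
    ultimately show "\<exists>I1 s. s \<le> t Q r * max 1 (length I0) ^ d \<and>
        computes_within M (enc3 I0 Q r) s I1 \<and> I1 \<in> inst P1 \<and>
        (opt P0 I0 \<ge> real Q \<longrightarrow> opt P1 I1 \<ge> real q) \<and>
        (opt P0 I0 < real (g r) \<longrightarrow> opt P1 I1 < real r)"
      by (meson order_trans)
  qed
  with \<open>tm_wf M\<close> show thesis by (rule that)
qed

lemma enc3_eq: "enc3 I q r = map Bit I @ Hash # (map Bit (bin q) @ Hash # map Bit (bin r))"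
  by (simp add: enc3_def enc2_def)

lemma gap_decider_via_reduction:
  assumes M: "tm_wf M" and red: "gap_reduction_at M t d P0 P1 Q r p q"
    and M1: "tm_wf M1" and dec: "gap_decides_in P1 r q (B / (real d + 1)) M1 C"
    and B: "real d + 1 \<le> B"
  shows "\<exists>M0 C0. tm_wf M0 \<and> gap_decides_in P0 p Q B M0 C0"
proof (intro exI conjI)
  define u where "u = map Bit (bin Q) @ Hash # map Bit (bin r)"
  define U where "U = real (length u)"
  define M0 where "M0 = tm_seq (append_tm u) (tm_seq M M1)"
  define C0 where "C0 = (2 * U + 10 + t) + \<bar>C\<bar> * (U + 3 + t) powr (B / (real d + 1))"
  show "tm_wf M0" unfolding M0_def by (intro tm_wf_seq tm_wf_append_tm M M1)
  show "gap_decides_in P0 p Q B M0 C0"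
    unfolding gap_decides_in_def
  proof
    fix I0 assume "I0 \<in> inst P0"
    then obtain I1 s where s: "s \<le> t * max 1 (length I0) ^ d"
      and comp: "computes_within M (map Bit I0 @ Hash # u) s I1" and "I1 \<in> inst P1"
      and yes: "opt P0 I0 \<ge> real Q \<longrightarrow> opt P1 I1 \<ge> real q"
      and no: "opt P0 I0 < real p \<longrightarrow> opt P1 I1 < real r"
      using red unfolding gap_reduction_at_def u_def enc3_eq by blast
    then obtain s1 where s1: "real s1 \<le> C * real (max 1 (length I1)) powr (B / (real d + 1))"
      and "halts_within M1 (enc_word I1) s1"
      and rej1: "opt P1 I1 < real r \<longrightarrow> rejects_within M1 (enc_word I1) s1"
      and acc1: "opt P1 I1 \<ge> real q \<longrightarrow> accepts_within M1 (enc_word I1) s1"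
      using dec unfolding gap_decides_in_def by blast
    then obtain T where T: "T \<le> 2 * length I0 + 2 * length u + 8 + s + s1"
      and halt: "halts_within M0 (enc_word I0) T"
      and head: "head_sym (snd (snd (conf M0 (enc_word I0) T))) =
        head_sym (snd (snd (conf M1 (enc_word I1) s1)))"
      using append_compute_decide_run[OF M comp] unfolding M0_def by blast
    have "length I1 \<le> length I0 + 1 + length u + s"
      using computes_within_output_length[OF comp] by simp
    then have "real T \<le> C0 * real (max 1 (length I0)) powr B"
      using T s s1 B unfolding U_def C0_def
      by (intro composed_time_bound[where s = "real s" and L = "real (max 1 (length I1))"])
        (auto simp flip: of_nat_power of_nat_mult)
    with halt head yes no rej1 acc1 show "\<exists>T. real T \<le> C0 * real (max 1 (length I0)) powr B \<and>
        halts_within M0 (enc_word I0) T \<and>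
        (opt P0 I0 < real p \<longrightarrow> rejects_within M0 (enc_word I0) T) \<and>
        (real Q \<le> opt P0 I0 \<longrightarrow> accepts_within M0 (enc_word I0) T)"
      by (auto simp: accepts_within_iff rejects_within_iff)
  qed
qed

lemma gap_decider_pullback:
  assumes f: "filterlim f at_top sequentially" and M: "tm_wf M"
    and red: "\<And>Q r q. 0 < Q \<Longrightarrow> 0 < r \<Longrightarrow> q \<le> f Q \<Longrightarrow> gap_reduction_at M (t Q r) d P0 P1 Q r (g r) q"
    and "0 < r" and M1: "tm_wf M1" and dec: "gap_decides_in P1 r q (B / (real d + 1)) M1 C"
    and B: "real d + 1 \<le> B"
  obtains Q where "g r \<le> Q" and "\<exists>M0 C0. tm_wf M0 \<and> gap_decides_in P0 (g r) Q B M0 C0"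
proof -
  obtain Qf where Qf: "\<And>Q. Q \<ge> Qf \<Longrightarrow> q \<le> f Q"
    using f unfolding filterlim_at_top eventually_sequentially by blast
  define Q where "Q = max (max Qf (g r)) 1"
  have "0 < Q" and "g r \<le> Q" and "q \<le> f Q" using Qf by (auto simp: Q_def)
  from gap_decider_via_reduction[OF M red[OF \<open>0 < Q\<close> \<open>0 < r\<close> \<open>q \<le> f Q\<close>] M1 dec B]
  show thesis by (rule that[OF \<open>g r \<le> Q\<close>])
qed

theorem proposition3:
  fixes f g :: "nat \<Rightarrow> nat" and \<beta> :: "nat \<Rightarrow> real" and P0 P1 :: opt_problem
  assumes "filterlim f at_top sequentially"
    and "filterlim g at_top sequentially"
    and "filterlim \<beta> at_top sequentially"
    and "fpt_gap_reducible f g P0 P1"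
    and "weakly_inh_enum \<beta> P0"
  shows "\<exists>c::real. c > 0 \<and> weakly_inh_enum (\<lambda>r. c * \<beta> (g r)) P1"
proof -
  obtain M t d where M: "tm_wf M" and red: "\<And>Q r q. 0 < Q \<Longrightarrow> 0 < r \<Longrightarrow> q \<le> f Q \<Longrightarrow>
      gap_reduction_at M (t Q r) d P0 P1 Q r (g r) q"
    using fpt_gap_reducibleE[OF assms(4)] by blast
  obtain r0 :: real where hard: "\<forall>q r::nat. r0 \<le> real r \<and> r \<le> q \<longrightarrow>
      \<not> (\<exists>M C. tm_wf M \<and> gap_decides_in P0 r q (\<beta> r) M C)"
    using assms(5) unfolding weakly_inh_enum_def by blast
  have \<beta>g: "filterlim (\<lambda>r. \<beta> (g r)) at_top sequentially"
    using filterlim_compose[OF assms(3,2)] .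
  have "eventually (\<lambda>r. nat \<lceil>r0\<rceil> \<le> g r) sequentially"
    and "eventually (\<lambda>r. real d + 1 \<le> \<beta> (g r)) sequentially"
    using assms(2) \<beta>g unfolding filterlim_at_top by blast+
  from eventually_conj[OF this] obtain N
    where N: "\<And>r. r \<ge> N \<Longrightarrow> r0 \<le> real (g r) \<and> real d + 1 \<le> \<beta> (g r)"
    unfolding eventually_sequentially by (meson le_nat_iff of_nat_le_iff order.trans real_nat_ceiling_ge)
  define c where "c = 1 / (real d + 1)"
  have "\<not> (\<exists>M1 C. tm_wf M1 \<and> gap_decides_in P1 r q (c * \<beta> (g r)) M1 C)"
    if "real (N + 1) \<le> real r" for q r
  proof
    assume "\<exists>M1 C. tm_wf M1 \<and> gap_decides_in P1 r q (c * \<beta> (g r)) M1 C"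
    then obtain M1 C where "tm_wf M1" and "gap_decides_in P1 r q (\<beta> (g r) / (real d + 1)) M1 C"
      by (auto simp: c_def)
    moreover have "0 < r" and "r \<ge> N" using that by auto
    ultimately obtain Q where "g r \<le> Q" and "\<exists>M0 C0. tm_wf M0 \<and> gap_decides_in P0 (g r) Q (\<beta> (g r)) M0 C0"
      using gap_decider_pullback[OF assms(1) M red] N by blast
    then show False using hard N[OF \<open>r \<ge> N\<close>] by blast
  qed
  moreover have "c > 0" unfolding c_def by simp
  moreover from this have "filterlim (\<lambda>r. c * \<beta> (g r)) at_top sequentially"
    by (rule filterlim_tendsto_pos_mult_at_top[OF tendsto_const _ \<beta>g])
  ultimately show ?thesis
    unfolding weakly_inh_enum_def by (intro exI[of _ c] conjI exI[of _ "real (N + 1)"]) auto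
qed

end
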